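(* Let $\mathcal E$ be a semilattice with zero, $\mathbf K$ a field, $A$ an associative $\mathbf K$-algebra, and $\pi:\mathcal E\to A$ a map with $\pi(0)=0$ and $\pi(xy)=\pi(x)\pi(y)$ for all $x,y$, such that $A$ is generated as an algebra by $\pi(\mathcal E)$. Then (i) the spectrum $\hat A$ of $A$ is homeomorphic to the space $\hat{\mathcal E}_\pi$ of $\pi$-tight characters of $\mathcal E$; (ii) $A$ is isomorphic to the algebra $C_c(\hat{\mathcal E}_\pi,\mathbf K)$ of all locally constant, compactly supported $\mathbf K$-valued functions on $\hat{\mathcal E}_\pi$.
   Context: Under the hypotheses $A$ is commutative, and $\mathcal B_A=\{e\in A:e^2=e\}$ is a Boolean algebra (possibly without top) under $e\wedge f=ef$, $e\vee f=e+f-ef$, into which $\pi$ maps. A character of $\mathcal E$ is a nonzero map $\varphi:\mathcal E\to\{0,1\}$ with $\varphi(0)=0$ and $\varphi(xy)=\varphi(x)\varphi(y)$; the spectrum $\hat{\mathcal E}$ is the set of characters with the topology of pointwise convergence (induced from $\{0,1\}^{\mathcal E}$). A character $\varphi$ is $\pi$-tight if for all $n\ge1$ and $x,y_1,\dots,y_n\in\mathcal E$, $\pi(x)\le\bigvee_i\pi(y_i)$ in $\mathcal B_A$ implies $\varphi(x)\le\bigvee_i\varphi(y_i)$; $\hat{\mathcal E}_\pi\subseteq\hat{\mathcal E}$ is the (closed) subspace of $\pi$-tight characters. The spectrum $\hat A$ is the set of nonzero $\mathbf K$-algebra homomorphisms $A\to\mathbf K$ with the topology of pointwise convergence, $\mathbf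 K$ being discrete. *)

theory Defs
  imports "HOL-Analysis.Analysis"
begin

definition K_algebra :: "('k::field \<Rightarrow> 'a::ring \<Rightarrow> 'a) \<Rightarrow> bool" where
  "K_algebra sc \<longleftrightarrow> module sc \<and>
     (\<forall>c x y. sc c (x * y) = sc c x * y \<and> sc c (x * y) = x * sc c y)"

inductive_set alg_gen :: "('k::field \<Rightarrow> 'a::ring \<Rightarrow> 'a) \<Rightarrow> 'a set \<Rightarrow> 'a set"
  for sc S where
  base: "s \<in> S \<Longrightarrow> s \<in> alg_gen sc S"
| zero: "0 \<in> alg_gen sc S"
| add: "x \<in> alg_gen sc S \<Longrightarrow> y \<in> alg_gen sc S \<Longrightarrow> x + y \<in> alg_gen sc S"
| smult: "x \<in> alg_gen sc S \<Longrightarrow> sc c x \<in> alg_gen sc S"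
| mult: "x \<in> alg_gen sc S \<Longrightarrow> y \<in> alg_gen sc S \<Longrightarrow> x * y \<in> alg_gen sc S"

text \<open>Characters of a semilattice with zero (values in {0,1} rendered as bool).\<close>
definition sl_character :: "('e::{semilattice_inf,order_bot} \<Rightarrow> bool) \<Rightarrow> bool" where
  "sl_character \<phi> \<longleftrightarrow> \<phi> \<noteq> (\<lambda>_. False) \<and> \<not> \<phi> bot \<and>
     (\<forall>x y. \<phi> (inf x y) = (\<phi> x \<and> \<phi> y))"

text \<open>Join and order of the Boolean algebra of idempotents B_A.\<close>
fun idem_join :: "'a::ring list \<Rightarrow> 'a" where
  "idem_join [] = 0"
| "idem_join (e # es) = e + idem_join es - e * idem_join es"

definition idem_le :: "'a::ring \<Rightarrow> 'a \<Rightarrow> bool" where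
  "idem_le e f \<longleftrightarrow> e * f = e"

definition pi_tight :: "('e::{semilattice_inf,order_bot} \<Rightarrow> 'a::ring) \<Rightarrow> ('e \<Rightarrow> bool) \<Rightarrow> bool" where
  "pi_tight \<pi> \<phi> \<longleftrightarrow> (\<forall>x ys. ys \<noteq> [] \<longrightarrow> idem_le (\<pi> x) (idem_join (map \<pi> ys)) \<longrightarrow>
       \<phi> x \<longrightarrow> (\<exists>y\<in>set ys. \<phi> y))"

definition pointwise_top :: "('x \<Rightarrow> 'y) topology" where
  "pointwise_top = product_topology (\<lambda>_. discrete_topology UNIV) UNIV"

definition tight_spectrum :: "('e::{semilattice_inf,order_bot} \<Rightarrow> 'a::ring) \<Rightarrow> ('e \<Rightarrow> bool) topology" where
  "tight_spectrum \<pi> = subtopology pointwise_top {\<phi>. sl_character \<phi> \<and> pi_tight \<pi> \<phi>}"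

definition alg_hom_K :: "('k::field \<Rightarrow> 'a::ring \<Rightarrow> 'a) \<Rightarrow> ('a \<Rightarrow> 'k) \<Rightarrow> bool" where
  "alg_hom_K sc h \<longleftrightarrow> (\<forall>x y. h (x + y) = h x + h y) \<and> (\<forall>x y. h (x * y) = h x * h y) \<and>
     (\<forall>c x. h (sc c x) = c * h x)"

definition alg_spectrum :: "('k::field \<Rightarrow> 'a::ring \<Rightarrow> 'a) \<Rightarrow> ('a \<Rightarrow> 'k) topology" where
  "alg_spectrum sc = subtopology pointwise_top {h. alg_hom_K sc h \<and> h \<noteq> (\<lambda>_. 0)}"

definition locally_constant :: "'x topology \<Rightarrow> ('x \<Rightarrow> 'k) \<Rightarrow> bool" where
  "locally_constant X f \<longleftrightarrow>
     (\<forall>x\<in>topspace X. \<exists>U. openin X U \<and> x \<in> U \<and> (\<forall>y\<in>U. f y = f x))"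

text \<open>C_c(X,K): locally constant, compactly supported functions on X,
  represented as functions vanishing outside topspace X.\<close>
definition Cc :: "'x topology \<Rightarrow> ('x \<Rightarrow> 'k::field) set" where
  "Cc X = {f. (\<forall>x. x \<notin> topspace X \<longrightarrow> f x = 0) \<and> locally_constant X f \<and>
              compactin X (X closure_of {x \<in> topspace X. f x \<noteq> 0})}"

end

theory Submission
  imports Defs
begin

text \<open>Every element of \<open>A\<close> is a linear combination \<open>\<Sum> c\<^sub>i \<pi> x\<^sub>i\<close> of the commuting
  idempotents \<open>\<pi> x\<close>, so \<open>A\<close> is commutative, and a tight character \<open>\<phi>\<close> evaluates it to
  the sum of those \<open>c\<^sub>i\<close> with \<open>\<phi> x\<^sub>i\<close>. This is well defined because a cell
  \<open>\<pi> z \<Prod> (1 - \<pi> w)\<close> with \<open>\<phi> z\<close> and no \<open>\<phi> w\<close> cannot vanish, by tightness.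
  Conversely, by Zorn's lemma every nonzero cell contains a tight character, so these evaluations
  separate the points of \<open>A\<close>. Hence the characters of \<open>A\<close> are exactly the tight characters,
  with the same pointwise topology because every element involves only finitely many \<open>\<pi> x\<close>.
  The Gelfand transform is therefore injective, and it is onto \<open>C\<^sub>c\<close> because a locally
  constant function with compact support depends on only finitely many coordinates.\<close>

section \<open>The topology of pointwise convergence on predicates\<close>

definition cylinder :: "('x \<Rightarrow> 'y) \<Rightarrow> 'x set \<Rightarrow> ('x \<Rightarrow> 'y) set" where
  "cylinder \<phi> S = {\<psi>. \<forall>x\<in>S. \<psi> x = \<phi> x}"

lemma cylinder_self [simp]: "\<phi> \<in> cylinder \<phi> S"
  by (simp add: cylinder_def)

lemma topspace_pointwise_top [simp]: "topspace pointwise_top = UNIV"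
  by (simp add: pointwise_top_def)

lemma openin_pointwise_cylinder:
  assumes "finite S"
  shows "openin pointwise_top (cylinder \<phi> S)"
proof -
  have eq: "cylinder \<phi> S = PiE UNIV (\<lambda>i. if i \<in> S then {\<phi> i} else UNIV)"
    by (auto simp: cylinder_def PiE_def Pi_def split: if_splits)
  have "{i. (if i \<in> S then {\<phi> i} else UNIV) \<noteq> UNIV} \<subseteq> S"
    by auto
  then have "finite {i \<in> UNIV. (if i \<in> S then {\<phi> i} else UNIV) \<noteq> topspace (discrete_topology UNIV)}"
    using assms by (auto intro: finite_subset)
  then show ?thesis
    unfolding eq pointwise_top_def by (subst openin_PiE_gen) auto
qed

lemma openin_pointwise_contains_cylinder:
  assumes "openin pointwise_top V" "\<phi> \<in> V"
  obtains S where "finite S" "cylinder \<phi> S \<subseteq> V"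
proof -
  obtain U where U: "finite {i \<in> UNIV. U i \<noteq> topspace (discrete_topology UNIV)}"
      "\<phi> \<in> PiE UNIV U" "PiE UNIV U \<subseteq> V"
    using assms unfolding pointwise_top_def openin_product_topology_alt by blast
  have "\<psi> \<in> PiE UNIV U" if "\<psi> \<in> cylinder \<phi> {i. U i \<noteq> UNIV}" for \<psi>
  proof -
    have "\<psi> i \<in> U i" for i
      using that U(2) by (cases "U i = UNIV") (auto simp: cylinder_def PiE_UNIV_domain Pi_iff)
    then show ?thesis
      by (simp add: PiE_UNIV_domain Pi_iff)
  qed
  then have "cylinder \<phi> {i. U i \<noteq> UNIV} \<subseteq> V"
    using U(3) by blast
  moreover have "finite {i. U i \<noteq> UNIV}"
    using U(1) by simp
  ultimately show ?thesis
    using that by blast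
qed

lemma continuous_map_pointwise_finitely_determined:
  assumes "finite S"
    and determined: "\<And>\<phi> \<psi>. \<phi> \<in> T \<Longrightarrow> \<psi> \<in> T \<Longrightarrow> (\<forall>x\<in>S. \<phi> x = \<psi> x) \<Longrightarrow> f \<phi> = f \<psi>"
    and "f ` T \<subseteq> topspace Y"
  shows "continuous_map (subtopology pointwise_top T) Y f"
  unfolding continuous_map_def
proof (intro conjI allI impI)
  show "f \<in> topspace (subtopology pointwise_top T) \<rightarrow> topspace Y"
    using assms(3) by auto
  fix U assume "openin Y U"
  show "openin (subtopology pointwise_top T) {\<phi> \<in> topspace (subtopology pointwise_top T). f \<phi> \<in> U}"
  proof (subst openin_subopen, intro ballI)
    fix \<phi> assume \<phi>: "\<phi> \<in> {\<phi> \<in> topspace (subtopology pointwise_top T). f \<phi> \<in> U}"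
    have "T \<inter> cylinder \<phi> S \<subseteq> {\<phi> \<in> topspace (subtopology pointwise_top T). f \<phi> \<in> U}"
    proof
      fix \<psi> assume \<psi>: "\<psi> \<in> T \<inter> cylinder \<phi> S"
      then have "f \<psi> = f \<phi>"
        using \<phi> by (intro determined) (auto simp: cylinder_def)
      with \<phi> \<psi> show "\<psi> \<in> {\<phi> \<in> topspace (subtopology pointwise_top T). f \<phi> \<in> U}"
        by simp
    qed
    moreover have "openin (subtopology pointwise_top T) (T \<inter> cylinder \<phi> S)"
      by (intro openin_subtopology_Int2 openin_pointwise_cylinder assms(1))
    moreover have "\<phi> \<in> T \<inter> cylinder \<phi> S"
      using \<phi> by simp
    ultimately show "\<exists>W. openin (subtopology pointwise_top T) W \<and> \<phi> \<in> W \<and>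
        W \<subseteq> {\<phi> \<in> topspace (subtopology pointwise_top T). f \<phi> \<in> U}"
      by blast
  qed
qed

lemma closedin_pointwise_finitely_determined:
  assumes "\<And>i. finite (S i)"
    and determined: "\<And>i \<phi> \<psi>. (\<forall>x\<in>S i. \<phi> x = \<psi> x) \<Longrightarrow> P i \<phi> = P i \<psi>"
  shows "closedin pointwise_top {\<phi>. \<forall>i. P i \<phi>}"
  unfolding closedin_def
proof (intro conjI)
  show "openin pointwise_top (topspace pointwise_top - {\<phi>. \<forall>i. P i \<phi>})"
  proof (subst openin_subopen, intro ballI)
    fix \<phi> assume "\<phi> \<in> topspace pointwise_top - {\<phi>. \<forall>i. P i \<phi>}"
    then obtain i where "\<not> P i \<phi>"
      by auto
    have "cylinder \<phi> (S i) \<subseteq> topspace pointwise_top - {\<phi>. \<forall>i. P i \<phi>}"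
    proof
      fix \<psi> assume "\<psi> \<in> cylinder \<phi> (S i)"
      then have "P i \<psi> = P i \<phi>"
        by (intro determined) (simp add: cylinder_def)
      with \<open>\<not> P i \<phi>\<close> show "\<psi> \<in> topspace pointwise_top - {\<phi>. \<forall>i. P i \<phi>}"
        by auto
    qed
    then show "\<exists>W. openin pointwise_top W \<and> \<phi> \<in> W \<and> W \<subseteq> topspace pointwise_top - {\<phi>. \<forall>i. P i \<phi>}"
      by (intro exI[of _ "cylinder \<phi> (S i)"] conjI openin_pointwise_cylinder assms(1) cylinder_self)
  qed
qed simp

lemma compact_space_pointwise_top: "compact_space (pointwise_top :: ('x \<Rightarrow> 'y::finite) topology)"
  unfolding pointwise_top_def
  by (subst compact_space_product_topology) (simp add: compact_space_discrete_topology)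

lemma locally_constant_if_continuous_discrete:
  assumes "continuous_map X (discrete_topology UNIV) f"
  shows "locally_constant X f"
  unfolding locally_constant_def
proof
  fix x assume x: "x \<in> topspace X"
  have "openin X {y \<in> topspace X. f y \<in> {f x}}"
    using assms by (rule openin_continuous_map_preimage) simp
  with x show "\<exists>U. openin X U \<and> x \<in> U \<and> (\<forall>y\<in>U. f y = f x)"
    by (intro exI[of _ "{y \<in> topspace X. f y \<in> {f x}}"]) auto
qed

lemma locally_constant_pointwise_determined:
  assumes "locally_constant (subtopology pointwise_top T) f" "\<phi> \<in> T"
  obtains S where "finite S" "\<And>\<psi>. \<psi> \<in> T \<Longrightarrow> \<forall>x\<in>S. \<psi> x = \<phi> x \<Longrightarrow> f \<psi> = f \<phi>"
proof -
  obtain U where U: "openin (subtopology pointwise_top T) U" "\<phi> \<in> U" "\<forall>\<psi>\<in>U. f \<psi> = f \<phi>"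
    using assms unfolding locally_constant_def by auto
  obtain V where V: "openin pointwise_top V" "U = T \<inter> V"
    using U(1) by (auto simp: openin_subtopology)
  obtain S where "finite S" "cylinder \<phi> S \<subseteq> V"
    using openin_pointwise_contains_cylinder[OF V(1)] U(2) V(2) by blast
  moreover have "f \<psi> = f \<phi>" if "\<psi> \<in> T" "\<forall>x\<in>S. \<psi> x = \<phi> x" for \<psi>
    using U(3) V(2) that \<open>cylinder \<phi> S \<subseteq> V\<close> by (auto simp: cylinder_def)
  ultimately show ?thesis
    using that by blast
qed

lemma compactin_pointwise_determining_set:
  fixes f :: "('x \<Rightarrow> bool) \<Rightarrow> 'y"
  assumes compact: "compactin (subtopology pointwise_top T) K"
    and loc: "locally_constant (subtopology pointwise_top T) f"
    and nonzero: "\<And>\<phi>. \<phi> \<in> T \<Longrightarrow> \<exists>x. \<phi> x"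
  obtains St where "finite St"
    "\<And>\<psi> \<psi>'. \<psi> \<in> K \<Longrightarrow> \<psi>' \<in> T \<Longrightarrow> \<forall>x\<in>St. \<psi> x = \<psi>' x \<Longrightarrow> f \<psi> = f \<psi>'"
    "\<And>\<psi>. \<psi> \<in> K \<Longrightarrow> \<exists>x\<in>St. \<psi> x"
proof -
  have KT: "K \<subseteq> T"
    using compactin_subset_topspace[OF compact] by simp
  have "\<exists>S. finite S \<and> (\<exists>z\<in>S. \<phi> z) \<and> (\<forall>\<psi>\<in>T. (\<forall>x\<in>S. \<psi> x = \<phi> x) \<longrightarrow> f \<psi> = f \<phi>)"
    if \<phi>: "\<phi> \<in> T" for \<phi>
  proof -
    obtain S where "finite S" "\<And>\<psi>. \<psi> \<in> T \<Longrightarrow> \<forall>x\<in>S. \<psi> x = \<phi> x \<Longrightarrow> f \<psi> = f \<phi>"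
      using locally_constant_pointwise_determined[OF loc \<phi>] by blast
    moreover obtain z where "\<phi> z"
      using nonzero[OF \<phi>] by blast
    ultimately show ?thesis
      by (intro exI[of _ "insert z S"]) auto
  qed
  then obtain Sel where Sel: "\<And>\<phi>. \<phi> \<in> T \<Longrightarrow> finite (Sel \<phi>) \<and> (\<exists>z\<in>Sel \<phi>. \<phi> z) \<and>
      (\<forall>\<psi>\<in>T. (\<forall>x\<in>Sel \<phi>. \<psi> x = \<phi> x) \<longrightarrow> f \<psi> = f \<phi>)"
    by metis
  define B where "B \<phi> = T \<inter> cylinder \<phi> (Sel \<phi>)" for \<phi>
  have "openin (subtopology pointwise_top T) (B \<phi>)" if \<phi>: "\<phi> \<in> T" for \<phi>
    unfolding B_def using Sel[OF \<phi>] by (intro openin_subtopology_Int2 openin_pointwise_cylinder) blast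
  then have "\<forall>B'\<in>B ` K. openin (subtopology pointwise_top T) B'"
    using KT by blast
  moreover have "K \<subseteq> \<Union> (B ` K)"
    using KT by (auto simp: B_def)
  ultimately have "\<exists>Fs. finite Fs \<and> Fs \<subseteq> B ` K \<and> K \<subseteq> \<Union> Fs"
    using compact unfolding compactin_def by blast
  then obtain Fs where "finite Fs" "Fs \<subseteq> B ` K" "K \<subseteq> \<Union> Fs"
    by blast
  then obtain Ps where Ps: "finite Ps" "Ps \<subseteq> K" "K \<subseteq> \<Union> (B ` Ps)"
    using finite_subset_image[of Fs B K] by blast
  show ?thesis
  proof
    show "finite (\<Union> (Sel ` Ps))"
      using Ps KT Sel by blast
  next
    fix \<psi> \<psi>' assume \<psi>: "\<psi> \<in> K" "\<psi>' \<in> T" "\<forall>x\<in>\<Union> (Sel ` Ps). \<psi> x = \<psi>' x"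
    then obtain \<phi> where \<phi>: "\<phi> \<in> Ps" "\<psi> \<in> B \<phi>"
      using Ps(3) by blast
    then have "\<phi> \<in> T" "\<psi> \<in> T" "\<forall>x\<in>Sel \<phi>. \<psi> x = \<phi> x" "\<forall>x\<in>Sel \<phi>. \<psi>' x = \<phi> x"
      using Ps(2) KT \<psi>(3) by (auto simp: B_def cylinder_def)
    then show "f \<psi> = f \<psi>'"
      using Sel \<psi>(2) by metis
  next
    fix \<psi> assume "\<psi> \<in> K"
    then obtain \<phi> where \<phi>: "\<phi> \<in> Ps" "\<psi> \<in> B \<phi>"
      using Ps(3) by blast
    then obtain z where "z \<in> Sel \<phi>" "\<phi> z"
      using Ps(2) KT Sel by blast
    with \<phi> show "\<exists>x\<in>\<Union> (Sel ` Ps). \<psi> x"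
      by (auto simp: B_def cylinder_def)
  qed
qed

lemma factors_through_restriction:
  assumes "\<And>\<psi> \<psi>'. \<psi> \<in> T \<Longrightarrow> \<psi>' \<in> T \<Longrightarrow> {x \<in> S. \<psi> x} = {x \<in> S. \<psi>' x} \<Longrightarrow> f \<psi> = f \<psi>'"
    and "\<And>\<psi>. \<psi> \<in> T \<Longrightarrow> {x \<in> S. \<psi> x} = {} \<Longrightarrow> f \<psi> = 0"
  obtains g where "g {} = 0" "\<And>\<psi>. \<psi> \<in> T \<Longrightarrow> f \<psi> = g {x \<in> S. \<psi> x}"
proof -
  define rep where "rep R = (SOME \<psi>. \<psi> \<in> T \<and> {x \<in> S. \<psi> x} = R)" for R
  define g where "g R = (if \<exists>\<psi>\<in>T. {x \<in> S. \<psi> x} = R then f (rep R) else 0)" for R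
  have rep: "rep R \<in> T \<and> {x \<in> S. rep R x} = R" if "\<exists>\<psi>\<in>T. {x \<in> S. \<psi> x} = R" for R
    using someI_ex[of "\<lambda>\<psi>. \<psi> \<in> T \<and> {x \<in> S. \<psi> x} = R"] that unfolding rep_def by blast
  have "f \<psi> = g {x \<in> S. \<psi> x}" if "\<psi> \<in> T" for \<psi>
  proof -
    have ex: "\<exists>\<psi>'\<in>T. {x \<in> S. \<psi>' x} = {x \<in> S. \<psi> x}"
      using that by blast
    then show ?thesis
      using assms(1)[OF that, of "rep {x \<in> S. \<psi> x}"] rep[OF ex] by (simp add: g_def)
  qed
  moreover have "g {} = 0"
  proof (cases "\<exists>\<psi>\<in>T. {x \<in> S. \<psi> x} = {}")
    case True
    then have "f (rep {}) = 0"
      using rep[OF True] assms(2) by blast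
    with True show ?thesis
      unfolding g_def by (rule if_P[THEN trans])
  next
    case False
    then show ?thesis
      unfolding g_def by (rule if_not_P)
  qed
  ultimately show ?thesis
    using that by blast
qed

lemma Cc_pointwise_factors_through_finite:
  fixes f :: "('x \<Rightarrow> bool) \<Rightarrow> 'k::field"
  assumes f: "f \<in> Cc (subtopology pointwise_top T)"
    and nonzero: "\<And>\<phi>. \<phi> \<in> T \<Longrightarrow> \<exists>x. \<phi> x"
  obtains St g where "finite St" "g {} = 0" "\<And>\<psi>. \<psi> \<in> T \<Longrightarrow> f \<psi> = g {x \<in> St. \<psi> x}"
proof -
  let ?X = "subtopology pointwise_top T"
  define K where "K = ?X closure_of {\<psi> \<in> T. f \<psi> \<noteq> 0}"
  have loc: "locally_constant ?X f" and compact: "compactin ?X K"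
    using f by (auto simp: Cc_def K_def)
  obtain St where St: "finite St"
    "\<And>\<psi> \<psi>'. \<psi> \<in> K \<Longrightarrow> \<psi>' \<in> T \<Longrightarrow> \<forall>x\<in>St. \<psi> x = \<psi>' x \<Longrightarrow> f \<psi> = f \<psi>'"
    "\<And>\<psi>. \<psi> \<in> K \<Longrightarrow> \<exists>x\<in>St. \<psi> x"
    using compactin_pointwise_determining_set[OF compact loc nonzero] by blast
  have "{\<psi> \<in> T. f \<psi> \<noteq> 0} \<subseteq> K"
    unfolding K_def by (rule closure_of_subset) simp
  then have outside_K: "f \<psi> = 0" if "\<psi> \<in> T" "\<psi> \<notin> K" for \<psi>
    using that by blast
  have agree: "f \<psi> = f \<psi>'" if "\<psi> \<in> T" "\<psi>' \<in> T" "{x \<in> St. \<psi> x} = {x \<in> St. \<psi>' x}" for \<psi> \<psi>'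
  proof -
    have same: "\<forall>x\<in>St. \<psi> x = \<psi>' x" "\<forall>x\<in>St. \<psi>' x = \<psi> x"
      using that(3) by blast+
    consider "\<psi> \<in> K" | "\<psi>' \<in> K" | "\<psi> \<notin> K" "\<psi>' \<notin> K"
      by blast
    then show ?thesis
    proof cases
      case 1
      then show ?thesis
        using St(2) that(2) same(1) by blast
    next
      case 2
      then show ?thesis
        using St(2) that(1) same(2) by metis
    next
      case 3
      then show ?thesis
        using outside_K that by simp
    qed
  qed
  have vanish: "f \<psi> = 0" if "\<psi> \<in> T" "{x \<in> St. \<psi> x} = {}" for \<psi>
    using that St(3) outside_K by blast
  obtain g where "g {} = 0" "\<And>\<psi>. \<psi> \<in> T \<Longrightarrow> f \<psi> = g {x \<in> St. \<psi> x}"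
    using factors_through_restriction[of T St f, OF agree vanish] by blast
  with St(1) that show ?thesis
    by blast
qed

section \<open>Linear combinations of the generators and cells\<close>

lemma alg_hom_K_zero: "alg_hom_K sc h \<Longrightarrow> h 0 = 0"
  unfolding alg_hom_K_def by (metis add_0 add_cancel_right_right)

lemma alg_hom_K_diff: "alg_hom_K sc h \<Longrightarrow> h (a - b) = h a - h b"
  unfolding alg_hom_K_def by (metis diff_add_cancel eq_diff_eq)

lemma le_foldr_inf_iff: "(a::'e::semilattice_inf) \<le> foldr inf ts z \<longleftrightarrow> (\<forall>t\<in>set ts. a \<le> t) \<and> a \<le> z"
  by (induction ts) auto

lemma sl_character_foldr_inf: "sl_character \<phi> \<Longrightarrow> \<phi> (foldr inf ts z) \<longleftrightarrow> (\<forall>t\<in>set ts. \<phi> t) \<and> \<phi> z"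
  by (induction ts) (auto simp: sl_character_def)

locale semilattice_generated_algebra =
  fixes sc :: "'k::field \<Rightarrow> 'a::ring \<Rightarrow> 'a" and \<pi> :: "'e::{semilattice_inf,order_bot} \<Rightarrow> 'a"
  assumes K_algebra: "K_algebra sc"
    and pi_bot: "\<pi> bot = 0"
    and pi_inf: "\<And>x y. \<pi> (inf x y) = \<pi> x * \<pi> y"
    and generated: "alg_gen sc (range \<pi>) = UNIV"

sublocale semilattice_generated_algebra \<subseteq> module sc
  using K_algebra by (simp add: K_algebra_def)

context semilattice_generated_algebra
begin

lemma scale_mult_left: "sc c (x * y) = sc c x * y"
  using K_algebra by (simp add: K_algebra_def)

lemma scale_mult_right: "sc c (x * y) = x * sc c y"
  using K_algebra unfolding K_algebra_def by blast

lemma scale_mult_scale: "sc c u * sc d v = sc (c * d) (u * v)"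
  by (metis scale_scale scale_mult_left scale_mult_right)

lemma scale_eq_0_imp_coeff_eq_0: "sc c e = 0 \<Longrightarrow> e \<noteq> 0 \<Longrightarrow> c = 0"
  by (metis scale_one scale_scale scale_zero_right field_class.field_inverse)

lemma scale_minus_one: "sc (-1) u = - u"
  by (metis scale_one scale_left_distrib add.right_inverse add_eq_0_iff scale_zero_left)

definition lincomb :: "('k \<times> 'e) list \<Rightarrow> 'a" where
  "lincomb L = (\<Sum>(c, x)\<leftarrow>L. sc c (\<pi> x))"

lemma lincomb_Nil [simp]: "lincomb [] = 0"
  and lincomb_Cons [simp]: "lincomb ((c, x) # L) = sc c (\<pi> x) + lincomb L"
  and lincomb_append [simp]: "lincomb (L1 @ L2) = lincomb L1 + lincomb L2"
  by (simp_all add: lincomb_def)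

definition scale_coeffs :: "'k \<Rightarrow> ('k \<times> 'e) list \<Rightarrow> ('k \<times> 'e) list" where
  "scale_coeffs c L = map (\<lambda>(d, y). (c * d, y)) L"

lemma lincomb_scale_coeffs: "lincomb (scale_coeffs c L) = sc c (lincomb L)"
  by (induction L) (auto simp: scale_coeffs_def scale_right_distrib)

definition lincomb_product :: "('k \<times> 'e) list \<Rightarrow> ('k \<times> 'e) list \<Rightarrow> ('k \<times> 'e) list" where
  "lincomb_product L1 L2 = concat (map (\<lambda>(c, x). map (\<lambda>(d, y). (c * d, inf x y)) L2) L1)"

lemma lincomb_mult: "lincomb L1 * lincomb L2 = lincomb (lincomb_product L1 L2)"
proof (induction L1)
  case Nil
  then show ?case
    by (simp add: lincomb_product_def)
next
  case (Cons p L1)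
  obtain c x where p: "p = (c, x)"
    by force
  have "sc c (\<pi> x) * lincomb L2 = lincomb (map (\<lambda>(d, y). (c * d, inf x y)) L2)"
    by (induction L2) (auto simp: distrib_left scale_mult_scale pi_inf)
  with Cons show ?case
    by (simp add: p lincomb_product_def distrib_right)
qed

lemma ex_lincomb: "\<exists>L. a = lincomb L"
proof -
  have "a \<in> alg_gen sc (range \<pi>)"
    using generated by simp
  then show ?thesis
  proof (induction rule: alg_gen.induct)
    case (base s)
    then obtain x where "s = \<pi> x"
      by auto
    then show ?case
      by (intro exI[of _ "[(1, x)]"]) simp
  next
    case zero
    show ?case
      by (intro exI[of _ "[]"]) simp
  next
    case (add x y)
    then show ?case
      by (metis lincomb_append)
  next
    case (smult x c)
    then show ?case
      by (metis lincomb_scale_coeffs)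
  next
    case (mult x y)
    then show ?case
      by (metis lincomb_mult)
  qed
qed

lemma pi_idem: "\<pi> x * \<pi> x = \<pi> x"
  by (metis inf_idem pi_inf)

lemma pi_mult_commute: "\<pi> x * \<pi> y = \<pi> y * \<pi> x"
  by (metis inf_commute pi_inf)

lemma pi_absorb: "x \<le> y \<Longrightarrow> \<pi> x * \<pi> y = \<pi> x"
  by (metis inf.absorb1 pi_inf)

text \<open>Commutativity of \<open>A\<close> need not be assumed: it is spanned by the pairwise commuting \<open>\<pi> x\<close>.\<close>

lemma mult_commute: "a * b = b * (a::'a)"
proof -
  obtain L1 L2 where "a = lincomb L1" "b = lincomb L2"
    using ex_lincomb by metis
  moreover have "sc c (\<pi> x) * lincomb L = lincomb L * sc c (\<pi> x)" for c x L
    by (induction L) (auto simp: distrib_left distrib_right scale_mult_scale pi_mult_commute mult.commute)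
  then have "lincomb L1 * lincomb L2 = lincomb L2 * lincomb L1"
    by (induction L1) (auto simp: distrib_left distrib_right)
  ultimately show ?thesis
    by simp
qed

lemma mult_left_commute: "a * (b * c) = b * (a * (c::'a))"
  by (metis mult_commute mult.assoc)

lemmas mult_ac = mult.assoc mult_commute mult_left_commute

definition pi_join :: "'e list \<Rightarrow> 'a" where
  "pi_join ws = idem_join (map \<pi> ws)"

lemma pi_join_Nil [simp]: "pi_join [] = 0"
  and pi_join_Cons: "pi_join (w # ws) = \<pi> w + pi_join ws - \<pi> w * pi_join ws"
  by (simp_all add: pi_join_def)

lemma pi_mult_pi_join: "x \<in> set ws \<Longrightarrow> \<pi> x * pi_join ws = \<pi> x"
proof (induction ws)
  case (Cons w ws)
  show ?case
  proof (cases "x = w")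
    case True
    then show ?thesis
      by (simp add: pi_join_Cons algebra_simps pi_idem flip: mult.assoc)
  next
    case False
    then have "\<pi> x * pi_join ws = \<pi> x"
      using Cons by simp
    moreover have "\<pi> x * pi_join (w # ws) = \<pi> x * \<pi> w + \<pi> x * pi_join ws - \<pi> w * (\<pi> x * pi_join ws)"
      by (simp add: pi_join_Cons algebra_simps mult_ac)
    ultimately show ?thesis
      by (simp add: pi_mult_commute)
  qed
qed simp

lemma pi_join_mult_subset: "set us \<subseteq> set ws \<Longrightarrow> pi_join us * pi_join ws = pi_join us"
proof (induction us)
  case (Cons u us)
  then have IH: "pi_join us * pi_join ws = pi_join us" and u: "\<pi> u * pi_join ws = \<pi> u"
    using pi_mult_pi_join by auto
  have "pi_join (u # us) * pi_join ws = \<pi> u * pi_join ws + pi_join us * pi_join ws - \<pi> u * (pi_join us * pi_join ws)"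
    by (simp add: pi_join_Cons algebra_simps mult.assoc)
  then show ?case
    by (simp add: IH u pi_join_Cons)
qed simp

text \<open>\<open>cell z ws\<close> stands for \<open>\<pi> z \<Prod>\<^sub>w (1 - \<pi> w)\<close>, written without a unit.\<close>

definition cell :: "'e \<Rightarrow> 'e list \<Rightarrow> 'a" where
  "cell z ws = \<pi> z - \<pi> z * pi_join ws"

lemma cell_Nil: "cell z [] = \<pi> z"
  by (simp add: cell_def)

lemma cell_absorb:
  assumes "x \<le> y" "set vs \<subseteq> set ws"
  shows "cell x ws * cell y vs = cell x ws"
proof -
  have "cell x ws * cell y vs = \<pi> x * \<pi> y - \<pi> x * \<pi> y * pi_join vs - \<pi> x * \<pi> y * pi_join ws
      + \<pi> x * \<pi> y * (pi_join vs * pi_join ws)"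
    by (simp add: cell_def algebra_simps mult_ac)
  also have "\<dots> = cell x ws"
    by (simp add: pi_absorb[OF assms(1)] pi_join_mult_subset[OF assms(2)] cell_def)
  finally show ?thesis .
qed

lemma cell_eq_0_mono: "x \<le> y \<Longrightarrow> set vs \<subseteq> set ws \<Longrightarrow> cell y vs = 0 \<Longrightarrow> cell x ws = 0"
  by (metis cell_absorb mult_zero_right)

lemma cell_mem_eq_0: "x \<in> set ws \<Longrightarrow> cell x ws = 0"
  by (simp add: cell_def pi_mult_pi_join)

lemma pi_mult_cell: "\<pi> x * cell z ws = cell (inf z x) ws"
  by (simp add: cell_def pi_inf algebra_simps mult_ac)

lemma cell_split: "cell z ws = cell (inf z x) ws + cell z (x # ws)"
  by (simp add: cell_def pi_join_Cons pi_inf algebra_simps mult_ac)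

section \<open>Evaluation at tight characters\<close>

definition tight_chars :: "('e \<Rightarrow> bool) set" where
  "tight_chars = {\<phi>. sl_character \<phi> \<and> pi_tight \<pi> \<phi>}"

lemma topspace_tight_spectrum [simp]: "topspace (tight_spectrum \<pi>) = tight_chars"
  by (simp add: tight_spectrum_def tight_chars_def)

lemma tight_chars_sl_character: "\<phi> \<in> tight_chars \<Longrightarrow> sl_character \<phi>"
  by (simp add: tight_chars_def)

lemma tight_chars_nonzero: "\<phi> \<in> tight_chars \<Longrightarrow> \<exists>x. \<phi> x"
  by (auto simp: tight_chars_def sl_character_def)

definition evaluate :: "('e \<Rightarrow> bool) \<Rightarrow> ('k \<times> 'e) list \<Rightarrow> 'k" where
  "evaluate \<phi> L = (\<Sum>(c, x)\<leftarrow>L. if \<phi> x then c else 0)"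

lemma evaluate_Nil [simp]: "evaluate \<phi> [] = 0"
  and evaluate_Cons [simp]: "evaluate \<phi> ((c, x) # L) = (if \<phi> x then c else 0) + evaluate \<phi> L"
  and evaluate_append [simp]: "evaluate \<phi> (L1 @ L2) = evaluate \<phi> L1 + evaluate \<phi> L2"
  by (simp_all add: evaluate_def)

lemma evaluate_scale_coeffs: "evaluate \<phi> (scale_coeffs c L) = c * evaluate \<phi> L"
  by (induction L) (auto simp: scale_coeffs_def algebra_simps)

lemma evaluate_lincomb_product:
  assumes "sl_character \<phi>"
  shows "evaluate \<phi> (lincomb_product L1 L2) = evaluate \<phi> L1 * evaluate \<phi> L2"
proof (induction L1)
  case Nil
  then show ?case
    by (simp add: lincomb_product_def)
next
  case (Cons p L1)
  obtain c x where p: "p = (c, x)"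
    by force
  have "evaluate \<phi> (map (\<lambda>(d, y). (c * d, inf x y)) L2) = (if \<phi> x then c else 0) * evaluate \<phi> L2"
    using assms by (induction L2) (auto simp: sl_character_def algebra_simps)
  with Cons show ?case
    by (simp add: p lincomb_product_def algebra_simps)
qed

lemma evaluate_cong: "\<forall>x\<in>snd ` set L. \<phi> x = \<psi> x \<Longrightarrow> evaluate \<phi> L = evaluate \<psi> L"
  by (induction L) auto

lemma evaluate_nonzero_imp_ex: "evaluate \<phi> L \<noteq> 0 \<Longrightarrow> \<exists>x\<in>snd ` set L. \<phi> x"
  by (induction L) (auto split: if_splits)

text \<open>The hypothesis puts the cell below every \<open>\<pi> x\<close> of \<open>L\<close> with \<open>\<phi> x\<close> and orthogonal
  to the others, so each \<open>\<pi> x\<close> acts on it as \<open>1\<close> or \<open>0\<close> according to \<open>\<phi> x\<close>.\<close>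

lemma lincomb_mult_cell:
  assumes "\<forall>(c, x)\<in>set L. (\<phi> x \<longrightarrow> z \<le> x) \<and> (\<not> \<phi> x \<longrightarrow> x \<in> set ws)"
  shows "lincomb L * cell z ws = sc (evaluate \<phi> L) (cell z ws)"
  using assms
proof (induction L)
  case (Cons p L)
  obtain c x where p: "p = (c, x)"
    by force
  have "\<pi> x * cell z ws = (if \<phi> x then cell z ws else 0)"
    using Cons.prems cell_eq_0_mono[OF inf_le2 order_refl cell_mem_eq_0, of x ws z]
    by (auto simp: p pi_mult_cell inf.absorb1)
  then have "sc c (\<pi> x) * cell z ws = sc (if \<phi> x then c else 0) (cell z ws)"
    by (simp flip: scale_mult_left)
  with Cons show ?case
    by (simp add: p distrib_right scale_left_distrib)
qed simp

lemma tight_cell_nonzero: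
  assumes \<phi>: "\<phi> \<in> tight_chars" and "\<phi> z" "\<forall>w\<in>set ws. \<not> \<phi> w"
  shows "cell z ws \<noteq> 0"
proof
  assume cell: "cell z ws = 0"
  have tight: "pi_tight \<pi> \<phi>" and "\<not> \<phi> bot"
    using \<phi> by (auto simp: tight_chars_def sl_character_def)
  show False
  proof (cases "ws = []")
    case True
    then have "idem_le (\<pi> z) (idem_join (map \<pi> [bot]))"
      using cell by (simp add: idem_le_def cell_Nil pi_bot)
    then have "\<exists>y\<in>set [bot]. \<phi> y"
      using tight \<open>\<phi> z\<close> unfolding pi_tight_def by blast
    with \<open>\<not> \<phi> bot\<close> show False
      by simp
  next
    case False
    have "idem_le (\<pi> z) (idem_join (map \<pi> ws))"
      using cell by (simp add: idem_le_def cell_def pi_join_def)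
    then have "\<exists>y\<in>set ws. \<phi> y"
      using tight False \<open>\<phi> z\<close> unfolding pi_tight_def by blast
    with assms(3) show False
      by blast
  qed
qed

text \<open>Multiply \<open>lincomb L = 0\<close> by the cell cut out by \<open>\<phi>\<close> on the support of \<open>L\<close>; that cell
  is nonzero by tightness.\<close>

lemma evaluate_eq_0_if_lincomb_eq_0:
  assumes \<phi>: "\<phi> \<in> tight_chars" and L: "lincomb L = 0"
  shows "evaluate \<phi> L = 0"
proof -
  obtain z0 where "\<phi> z0"
    using tight_chars_nonzero[OF \<phi>] by blast
  define z where "z = foldr inf (filter \<phi> (map snd L)) z0"
  define ws where "ws = filter (Not \<circ> \<phi>) (map snd L)"
  have "\<phi> z"
    using sl_character_foldr_inf[OF tight_chars_sl_character[OF \<phi>]] \<open>\<phi> z0\<close> by (simp add: z_def)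
  have "z \<le> x" if "x \<in> snd ` set L" "\<phi> x" for x
    using le_foldr_inf_iff[of z "filter \<phi> (map snd L)" z0] that by (simp add: z_def)
  then have "\<forall>(c, x)\<in>set L. (\<phi> x \<longrightarrow> z \<le> x) \<and> (\<not> \<phi> x \<longrightarrow> x \<in> set ws)"
    by (auto simp: ws_def image_iff) (metis snd_conv)+
  then have "sc (evaluate \<phi> L) (cell z ws) = 0"
    using L by (simp flip: lincomb_mult_cell)
  moreover have "cell z ws \<noteq> 0"
    using tight_cell_nonzero[OF \<phi> \<open>\<phi> z\<close>] by (simp add: ws_def)
  ultimately show ?thesis
    using scale_eq_0_imp_coeff_eq_0 by blast
qed

lemma evaluate_well_defined:
  assumes "\<phi> \<in> tight_chars" "lincomb L1 = lincomb L2"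
  shows "evaluate \<phi> L1 = evaluate \<phi> L2"
proof -
  let ?L = "L1 @ scale_coeffs (-1) L2"
  have "lincomb ?L = 0"
    using assms(2) by (simp add: lincomb_scale_coeffs scale_minus_one)
  then have "evaluate \<phi> ?L = 0"
    by (rule evaluate_eq_0_if_lincomb_eq_0[OF assms(1)])
  then show ?thesis
    by (simp add: evaluate_scale_coeffs)
qed

definition char_hom :: "('e \<Rightarrow> bool) \<Rightarrow> 'a \<Rightarrow> 'k" where
  "char_hom \<phi> a = evaluate \<phi> (SOME L. a = lincomb L)"

lemma char_hom_lincomb: "\<phi> \<in> tight_chars \<Longrightarrow> char_hom \<phi> (lincomb L) = evaluate \<phi> L"
  unfolding char_hom_def by (rule evaluate_well_defined) (auto intro: someI_ex[OF ex_lincomb, symmetric])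

lemma char_hom_add: "\<phi> \<in> tight_chars \<Longrightarrow> char_hom \<phi> (a + b) = char_hom \<phi> a + char_hom \<phi> b"
  by (metis ex_lincomb char_hom_lincomb lincomb_append evaluate_append)

lemma char_hom_mult: "\<phi> \<in> tight_chars \<Longrightarrow> char_hom \<phi> (a * b) = char_hom \<phi> a * char_hom \<phi> b"
  by (metis ex_lincomb char_hom_lincomb lincomb_mult evaluate_lincomb_product tight_chars_sl_character)

lemma char_hom_scale: "\<phi> \<in> tight_chars \<Longrightarrow> char_hom \<phi> (sc c a) = c * char_hom \<phi> a"
  by (metis ex_lincomb char_hom_lincomb lincomb_scale_coeffs evaluate_scale_coeffs)

lemma char_hom_pi: "\<phi> \<in> tight_chars \<Longrightarrow> char_hom \<phi> (\<pi> x) = (if \<phi> x then 1 else 0)"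
  using char_hom_lincomb[of \<phi> "[(1, x)]"] by simp

lemma char_hom_zero: "\<phi> \<in> tight_chars \<Longrightarrow> char_hom \<phi> 0 = 0"
  using char_hom_lincomb[of \<phi> "[]"] by simp

lemma char_hom_diff: "\<phi> \<in> tight_chars \<Longrightarrow> char_hom \<phi> (a - b) = char_hom \<phi> a - char_hom \<phi> b"
  by (metis add_diff_cancel diff_add_cancel char_hom_add)

lemma char_hom_pi_join:
  "\<phi> \<in> tight_chars \<Longrightarrow> char_hom \<phi> (pi_join ws) = (if \<exists>w\<in>set ws. \<phi> w then 1 else 0)"
  by (induction ws) (auto simp: pi_join_Cons char_hom_diff char_hom_add char_hom_mult char_hom_pi char_hom_zero)

lemma char_hom_cell:
  "\<phi> \<in> tight_chars \<Longrightarrow> char_hom \<phi> (cell z ws) = (if \<phi> z \<and> (\<forall>w\<in>set ws. \<not> \<phi> w) then 1 else 0)"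
  by (auto simp: cell_def char_hom_diff char_hom_mult char_hom_pi char_hom_pi_join)

lemma alg_hom_K_char_hom: "\<phi> \<in> tight_chars \<Longrightarrow> alg_hom_K sc (char_hom \<phi>)"
  by (simp add: alg_hom_K_def char_hom_add char_hom_mult char_hom_scale)

lemma char_hom_nonzero: "\<phi> \<in> tight_chars \<Longrightarrow> char_hom \<phi> \<noteq> (\<lambda>_. 0)"
  by (metis char_hom_pi tight_chars_nonzero zero_neq_one)

section \<open>Nonzero cells contain tight characters\<close>

text \<open>A set \<open>M\<close> of prescriptions \<open>(x, b)\<close>, read as \<open>\<phi> x = b\<close>, is consistent with
  the cell \<open>cell z ws\<close> if every finite part of it leaves a nonzero subcell.\<close>

definition cell_consistent :: "'e \<Rightarrow> 'e list \<Rightarrow> ('e \<times> bool) set \<Rightarrow> bool" where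
  "cell_consistent z ws M \<longleftrightarrow> (\<forall>ts vs. set ts \<subseteq> {x. (x, True) \<in> M} \<longrightarrow> set vs \<subseteq> {x. (x, False) \<in> M} \<longrightarrow>
     cell (foldr inf ts z) (vs @ ws) \<noteq> 0)"

lemma cell_consistent_cell_nonzero:
  assumes "cell_consistent z ws M" "set ts \<subseteq> {x. (x, True) \<in> M}" "set vs \<subseteq> {x. (x, False) \<in> M}"
    and "foldr inf ts z \<le> y" "set vs' \<subseteq> set (vs @ ws)"
  shows "cell y vs' \<noteq> 0"
  using assms cell_eq_0_mono unfolding cell_consistent_def by blast

lemma cell_consistent_chain_Union:
  assumes "cell z ws \<noteq> 0" and chain: "Ch \<in> chains {M. cell_consistent z ws M}"
  shows "cell_consistent z ws (\<Union>Ch)"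
  unfolding cell_consistent_def
proof (intro allI impI)
  fix ts vs
  assume ts: "set ts \<subseteq> {x. (x, True) \<in> \<Union>Ch}" and vs: "set vs \<subseteq> {x. (x, False) \<in> \<Union>Ch}"
  define F where "F = (\<lambda>t. (t, True)) ` set ts \<union> (\<lambda>v. (v, False)) ` set vs"
  show "cell (foldr inf ts z) (vs @ ws) \<noteq> 0"
  proof (cases "Ch = {}")
    case True
    then show ?thesis
      using ts vs assms(1) by simp
  next
    case False
    have "finite F" "F \<subseteq> \<Union>Ch"
      using ts vs by (auto simp: F_def)
    moreover have "subset.chain {M. cell_consistent z ws M} Ch"
      using chain by (simp add: chains_alt_def)
    ultimately obtain M where "M \<in> Ch" "F \<subseteq> M"
      using finite_subset_Union_chain[OF _ _ False] by metis
    moreover have "set ts \<subseteq> {x. (x, True) \<in> M}" "set vs \<subseteq> {x. (x, False) \<in> M}"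
      using \<open>F \<subseteq> M\<close> by (auto simp: F_def)
    ultimately show ?thesis
      using chain chainsD2 unfolding cell_consistent_def by blast
  qed
qed

text \<open>If both extensions of \<open>M\<close> failed, the two witnesses could be merged into one for
  \<open>M\<close> itself, by \<open>cell_split\<close> at \<open>x\<close>.\<close>

lemma cell_consistent_extend:
  assumes consistent: "cell_consistent z ws M"
  shows "cell_consistent z ws (insert (x, True) M) \<or> cell_consistent z ws (insert (x, False) M)"
proof (rule ccontr)
  assume "\<not> ?thesis"
  moreover have "{t. (t, True) \<in> insert (x, True) M} = insert x {t. (t, True) \<in> M}"
    "{v. (v, False) \<in> insert (x, True) M} = {v. (v, False) \<in> M}"
    "{t. (t, True) \<in> insert (x, False) M} = {t. (t, True) \<in> M}"
    "{v. (v, False) \<in> insert (x, False) M} = insert x {v. (v, False) \<in> M}"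
    by auto
  ultimately obtain ts1 vs1 ts2 vs2 where
    1: "set ts1 \<subseteq> insert x {t. (t, True) \<in> M}" "set vs1 \<subseteq> {v. (v, False) \<in> M}"
      "cell (foldr inf ts1 z) (vs1 @ ws) = 0" and
    2: "set ts2 \<subseteq> {t. (t, True) \<in> M}" "set vs2 \<subseteq> insert x {v. (v, False) \<in> M}"
      "cell (foldr inf ts2 z) (vs2 @ ws) = 0"
    unfolding cell_consistent_def by (metis (no_types, lifting))
  define ts where "ts = filter (\<lambda>t. t \<noteq> x) ts1 @ ts2"
  define vs where "vs = vs1 @ filter (\<lambda>v. v \<noteq> x) vs2"
  define a where "a = foldr inf ts z"
  have ts_M: "set ts \<subseteq> {t. (t, True) \<in> M}" and vs_M: "set vs \<subseteq> {v. (v, False) \<in> M}"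
    using 1 2 by (auto simp: ts_def vs_def)
  have a_le: "a \<le> t" if "t \<in> set ts" for t
    using le_foldr_inf_iff[of a ts z] that by (simp add: a_def)
  have "a \<le> z"
    using le_foldr_inf_iff[of a ts z] by (simp add: a_def)
  have "inf a x \<le> foldr inf ts1 z"
    unfolding le_foldr_inf_iff
  proof (intro conjI ballI)
    show "inf a x \<le> t" if "t \<in> set ts1" for t
      using that a_le[of t] by (cases "t = x") (auto simp: ts_def le_infI1)
    show "inf a x \<le> z"
      using \<open>a \<le> z\<close> by (simp add: le_infI1)
  qed
  then have "cell (inf a x) (vs @ ws) = 0"
    by (rule cell_eq_0_mono[OF _ _ 1(3)]) (auto simp: vs_def)
  moreover have "a \<le> foldr inf ts2 z"
    using a_le \<open>a \<le> z\<close> by (simp add: le_foldr_inf_iff ts_def)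
  then have "cell a (x # vs @ ws) = 0"
    by (rule cell_eq_0_mono[OF _ _ 2(3)]) (auto simp: vs_def)
  ultimately have "cell a (vs @ ws) = 0"
    using cell_split[of a "vs @ ws" x] by simp
  with consistent ts_M vs_M show False
    unfolding cell_consistent_def a_def by blast
qed

lemma cell_consistent_total_imp_tight_char:
  assumes consistent: "cell_consistent z ws M" and total: "\<And>x. (x, True) \<in> M \<or> (x, False) \<in> M"
  defines "\<phi> \<equiv> \<lambda>x. (x, True) \<in> M"
  shows "\<phi> \<in> tight_chars" "\<phi> z" "\<forall>w\<in>set ws. \<not> \<phi> w"
proof -
  note nonzero = cell_consistent_cell_nonzero[OF consistent]
  have not_\<phi>: "(x, False) \<in> M \<longleftrightarrow> \<not> \<phi> x" for x
    using total[of x] nonzero[of "[x]" "[x]" x "[x]"] by (auto simp: \<phi>_def cell_mem_eq_0)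
  have contra: False
    if "\<forall>t\<in>set ts. \<phi> t" "\<forall>v\<in>set vs. \<not> \<phi> v" "foldr inf ts z \<le> y" "set vs' \<subseteq> set (vs @ ws)"
      "cell y vs' = 0" for ts vs y vs'
  proof -
    have "set ts \<subseteq> {x. (x, True) \<in> M}" "set vs \<subseteq> {x. (x, False) \<in> M}"
      using that(1,2) not_\<phi> by (auto simp: \<phi>_def)
    with nonzero that(3-5) show False
      by blast
  qed
  show "\<phi> z"
    using contra[of "[]" "[z]" z "[z]"] by (auto simp: cell_mem_eq_0)
  show "\<forall>w\<in>set ws. \<not> \<phi> w"
    using contra[of "[w]" "[]" w "[w]" for w] by (auto simp: cell_mem_eq_0)
  have "\<not> \<phi> bot"
    using contra[of "[bot]" "[]" bot "[]"] by (auto simp: cell_Nil pi_bot)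
  moreover have "\<phi> (inf x y) \<longleftrightarrow> \<phi> x \<and> \<phi> y" for x y
  proof (intro iffI conjI)
    assume xy: "\<phi> (inf x y)"
    show "\<phi> x"
      using contra[of "[inf x y]" "[x]" x "[x]"] xy by (auto simp: cell_mem_eq_0 le_infI1)
    show "\<phi> y"
      using contra[of "[inf x y]" "[y]" y "[y]"] xy by (auto simp: cell_mem_eq_0 le_infI1)
  next
    assume "\<phi> x \<and> \<phi> y"
    then show "\<phi> (inf x y)"
      using contra[of "[x, y]" "[inf x y]" "inf x y" "[inf x y]"]
      by (auto simp: cell_mem_eq_0 le_infI1 le_infI2)
  qed
  moreover have "pi_tight \<pi> \<phi>"
    unfolding pi_tight_def
  proof (intro allI impI)
    fix x ys
    assume "idem_le (\<pi> x) (idem_join (map \<pi> ys))" "\<phi> x"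
    then have "cell x ys = 0" "\<phi> x"
      by (simp_all add: cell_def idem_le_def pi_join_def)
    then show "\<exists>y\<in>set ys. \<phi> y"
      using contra[of "[x]" ys x ys] by auto
  qed
  moreover obtain x where "\<phi> x"
    using \<open>\<phi> z\<close> by blast
  ultimately show "\<phi> \<in> tight_chars"
    unfolding tight_chars_def sl_character_def by auto
qed

lemma ex_tight_char_in_cell:
  assumes "cell z ws \<noteq> 0"
  obtains \<phi> where "\<phi> \<in> tight_chars" "\<phi> z" "\<forall>w\<in>set ws. \<not> \<phi> w"
proof -
  obtain M where M: "M \<in> {M. cell_consistent z ws M}"
    and maximal: "\<forall>M'\<in>{M. cell_consistent z ws M}. M \<subseteq> M' \<longrightarrow> M' = M"
    using Zorn_Lemma[of "{M. cell_consistent z ws M}"] cell_consistent_chain_Union[OF assms] by blast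
  have "(x, True) \<in> M \<or> (x, False) \<in> M" for x
    using cell_consistent_extend[of z ws M x] M maximal by blast
  then show ?thesis
    using cell_consistent_total_imp_tight_char[of z ws M] M that by blast
qed

lemma cell_split_orthogonal: "cell (inf z x) ws * cell z (x # ws) = 0"
proof -
  define e where "e = cell z ws"
  have e1: "cell (inf z x) ws = \<pi> x * e"
    by (simp add: e_def pi_mult_cell)
  have e2: "cell z (x # ws) = e - \<pi> x * e"
    using cell_split[of z ws x] e1 unfolding e_def by (metis add_diff_cancel_left')
  have "cell (inf z x) ws * cell z (x # ws) = \<pi> x * (e * e) - (\<pi> x * \<pi> x) * (e * e)"
    unfolding e1 e2 by (simp add: algebra_simps mult_ac)
  then show ?thesis
    by (simp add: pi_idem)
qed

lemma lincomb_Cons_mult_cell: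
  "sc c (cell z ws) + lincomb ((d, x) # L) * cell z ws =
    (sc (c + d) (cell (inf z x) ws) + lincomb L * cell (inf z x) ws) +
    (sc c (cell z (x # ws)) + lincomb L * cell z (x # ws))"
proof -
  have "sc d (\<pi> x) * cell z ws = sc d (cell (inf z x) ws)"
    by (simp add: pi_mult_cell flip: scale_mult_left)
  then have "sc c (cell z ws) + lincomb ((d, x) # L) * cell z ws =
      sc c (cell (inf z x) ws + cell z (x # ws)) + sc d (cell (inf z x) ws) +
      lincomb L * (cell (inf z x) ws + cell z (x # ws))"
    by (simp add: distrib_right add.assoc flip: cell_split)
  also have "\<dots> = (sc (c + d) (cell (inf z x) ws) + lincomb L * cell (inf z x) ws) +
      (sc c (cell z (x # ws)) + lincomb L * cell z (x # ws))"
    by (simp add: scale_right_distrib scale_left_distrib distrib_left algebra_simps)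
  finally show ?thesis .
qed

text \<open>Induction on \<open>L\<close>: splitting the cell along the first element \<open>x\<close> of \<open>L\<close> gives two
  orthogonal cells, on which \<open>\<pi> x\<close> acts as \<open>1\<close> and as \<open>0\<close>.\<close>

lemma ex_tight_char_nonzero_on_cell:
  assumes "sc c (cell z ws) + lincomb L * cell z ws \<noteq> 0"
  shows "\<exists>\<phi>\<in>tight_chars. char_hom \<phi> (sc c (cell z ws) + lincomb L * cell z ws) \<noteq> 0"
  using assms
proof (induction L arbitrary: z ws c)
  case Nil
  then have "c \<noteq> 0" "cell z ws \<noteq> 0"
    by auto
  then obtain \<phi> where "\<phi> \<in> tight_chars" "\<phi> z" "\<forall>w\<in>set ws. \<not> \<phi> w"
    using ex_tight_char_in_cell by blast
  with \<open>c \<noteq> 0\<close> show ?case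
    by (intro bexI[of _ \<phi>]) (simp_all add: char_hom_add char_hom_scale char_hom_zero char_hom_cell)
next
  case (Cons p L)
  obtain d x where p: "p = (d, x)"
    by force
  define e1 e2 where "e1 = cell (inf z x) ws" and "e2 = cell z (x # ws)"
  define T1 T2 where "T1 = sc (c + d) e1 + lincomb L * e1" and "T2 = sc c e2 + lincomb L * e2"
  have split: "sc c (cell z ws) + lincomb (p # L) * cell z ws = T1 + T2"
    unfolding p T1_def T2_def e1_def e2_def by (rule lincomb_Cons_mult_cell)
  have orth: "e1 * e2 = 0"
    unfolding e1_def e2_def by (rule cell_split_orthogonal)
  have orth_hom: "char_hom \<phi> e1 = 0 \<or> char_hom \<phi> e2 = 0" if "\<phi> \<in> tight_chars" for \<phi>
    using char_hom_mult[OF that, of e1 e2] orth char_hom_zero[OF that] by simp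
  have hom_T1: "char_hom \<phi> T1 = (c + d + char_hom \<phi> (lincomb L)) * char_hom \<phi> e1"
    and hom_T2: "char_hom \<phi> T2 = (c + char_hom \<phi> (lincomb L)) * char_hom \<phi> e2"
    if "\<phi> \<in> tight_chars" for \<phi>
    using that by (simp_all add: T1_def T2_def char_hom_add char_hom_scale char_hom_mult algebra_simps)
  have "T1 \<noteq> 0 \<or> T2 \<noteq> 0"
    using Cons.prems split by auto
  then show ?case
  proof
    assume "T1 \<noteq> 0"
    then obtain \<phi> where \<phi>: "\<phi> \<in> tight_chars" "char_hom \<phi> T1 \<noteq> 0"
      using Cons.IH[of "c + d" "inf z x" ws] by (auto simp: T1_def e1_def)
    then have "char_hom \<phi> T2 = 0"
      using orth_hom[OF \<phi>(1)] hom_T1[OF \<phi>(1)] hom_T2[OF \<phi>(1)] by auto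
    with \<phi> split show ?case
      by (intro bexI[of _ \<phi>]) (simp_all add: char_hom_add)
  next
    assume "T2 \<noteq> 0"
    then obtain \<phi> where \<phi>: "\<phi> \<in> tight_chars" "char_hom \<phi> T2 \<noteq> 0"
      using Cons.IH[of c z "x # ws"] by (auto simp: T2_def e2_def)
    then have "char_hom \<phi> T1 = 0"
      using orth_hom[OF \<phi>(1)] hom_T1[OF \<phi>(1)] hom_T2[OF \<phi>(1)] by auto
    with \<phi> split show ?case
      by (intro bexI[of _ \<phi>]) (simp_all add: char_hom_add)
  qed
qed

lemma ex_cell_mult_nonzero: "d * pi_join xs \<noteq> 0 \<Longrightarrow> \<exists>z ws. d * cell z ws \<noteq> 0"
proof (induction xs arbitrary: d)
  case (Cons x xs)
  show ?case
  proof (cases "d * \<pi> x = 0")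
    case False
    then have "d * cell x [] \<noteq> 0"
      by (simp add: cell_Nil)
    then show ?thesis
      by blast
  next
    case True
    have "d * pi_join (x # xs) = d * \<pi> x + (d - d * \<pi> x) * pi_join xs"
      by (simp add: pi_join_Cons algebra_simps mult.assoc)
    with True Cons.prems have "(d - d * \<pi> x) * pi_join xs \<noteq> 0"
      by simp
    then obtain z ws where "(d - d * \<pi> x) * cell z ws \<noteq> 0"
      using Cons.IH by blast
    moreover have "(d - d * \<pi> x) * cell z ws = d * cell z (x # ws)"
    proof -
      have split: "cell z ws = cell z (x # ws) + \<pi> x * cell z ws"
        using cell_split[of z ws x] pi_mult_cell[of x z ws] by simp
      have "(d - d * \<pi> x) * cell z ws = d * cell z ws - d * (\<pi> x * cell z ws)"
        by (simp add: algebra_simps mult.assoc)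
      also have "\<dots> = d * cell z (x # ws)"
        by (subst split) (simp add: distrib_left)
      finally show ?thesis .
    qed
    ultimately show ?thesis
      by metis
  qed
qed simp

lemma lincomb_mult_pi_join: "snd ` set L \<subseteq> set xs \<Longrightarrow> lincomb L * pi_join xs = lincomb L"
  by (induction L) (auto simp: distrib_right pi_mult_pi_join simp flip: scale_mult_left)

lemma char_hom_separates:
  assumes "\<forall>\<phi>\<in>tight_chars. char_hom \<phi> a = 0"
  shows "a = 0"
proof (rule ccontr)
  assume "a \<noteq> 0"
  obtain L where L: "a = lincomb L"
    using ex_lincomb by blast
  then have "a * pi_join (map snd L) = a"
    using lincomb_mult_pi_join[of L "map snd L"] by simp
  then obtain z ws where "a * cell z ws \<noteq> 0"
    using ex_cell_mult_nonzero \<open>a \<noteq> 0\<close> by metis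
  then have "sc 0 (cell z ws) + lincomb L * cell z ws \<noteq> 0"
    using L by simp
  then obtain \<phi> where "\<phi> \<in> tight_chars" "char_hom \<phi> (sc 0 (cell z ws) + lincomb L * cell z ws) \<noteq> 0"
    using ex_tight_char_nonzero_on_cell by blast
  with assms L show False
    by (simp add: char_hom_add char_hom_scale char_hom_mult)
qed

section \<open>The spectrum of \<open>A\<close>\<close>

lemma tight_spectrum_eq: "tight_spectrum \<pi> = subtopology pointwise_top tight_chars"
  by (simp add: tight_spectrum_def tight_chars_def)

definition alg_chars :: "('a \<Rightarrow> 'k) set" where
  "alg_chars = {h. alg_hom_K sc h \<and> h \<noteq> (\<lambda>_. 0)}"

lemma alg_spectrum_eq: "alg_spectrum sc = subtopology pointwise_top alg_chars"
  by (simp add: alg_spectrum_def alg_chars_def)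

lemma alg_hom_K_pi_cases:
  assumes "alg_hom_K sc h"
  shows "h (\<pi> x) = 0 \<or> h (\<pi> x) = 1"
proof -
  have "h (\<pi> x) * h (\<pi> x) = h (\<pi> x)"
    using assms pi_idem by (metis alg_hom_K_def)
  then show ?thesis
    by (metis mult_cancel_right2 mult_zero_left)
qed

lemma alg_hom_K_lincomb:
  assumes "alg_hom_K sc h"
  shows "h (lincomb L) = (\<Sum>(c, x)\<leftarrow>L. c * h (\<pi> x))"
  using assms by (induction L) (auto simp: alg_hom_K_def alg_hom_K_zero[OF assms])

lemma alg_hom_K_pi_join:
  assumes "alg_hom_K sc h"
  shows "h (pi_join ws) = (if \<exists>w\<in>set ws. h (\<pi> w) = 1 then 1 else 0)"
proof (induction ws)
  case (Cons w ws)
  show ?case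
    using Cons alg_hom_K_pi_cases[OF assms, of w] assms
    by (auto simp: pi_join_Cons alg_hom_K_diff alg_hom_K_def)
qed (simp add: alg_hom_K_zero[OF assms])

definition char_of_hom :: "('a \<Rightarrow> 'k) \<Rightarrow> 'e \<Rightarrow> bool" where
  "char_of_hom h = (\<lambda>x. h (\<pi> x) = 1)"

lemma char_of_hom_tight:
  assumes "h \<in> alg_chars"
  shows "char_of_hom h \<in> tight_chars"
proof -
  have h: "alg_hom_K sc h" and "h \<noteq> (\<lambda>_. 0)"
    using assms by (auto simp: alg_chars_def)
  have "char_of_hom h \<noteq> (\<lambda>_. False)"
  proof
    assume "char_of_hom h = (\<lambda>_. False)"
    then have "h (\<pi> x) = 0" for x
      using alg_hom_K_pi_cases[OF h, of x] unfolding char_of_hom_def by metis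
    then have "(\<Sum>(c, x)\<leftarrow>L. c * h (\<pi> x)) = 0" for L
      by (induction L) auto
    then have "h (lincomb L) = 0" for L
      by (simp add: alg_hom_K_lincomb[OF h])
    then show False
      using \<open>h \<noteq> (\<lambda>_. 0)\<close> ex_lincomb by (metis ext)
  qed
  moreover have "\<not> char_of_hom h bot"
    using h by (simp add: char_of_hom_def pi_bot alg_hom_K_zero)
  moreover have "char_of_hom h (inf x y) \<longleftrightarrow> char_of_hom h x \<and> char_of_hom h y" for x y
    using alg_hom_K_pi_cases[OF h, of x] alg_hom_K_pi_cases[OF h, of y] h
    by (auto simp: char_of_hom_def pi_inf alg_hom_K_def)
  moreover have "pi_tight \<pi> (char_of_hom h)"
    unfolding pi_tight_def
  proof (intro allI impI)
    fix x ys
    assume "idem_le (\<pi> x) (idem_join (map \<pi> ys))" "char_of_hom h x"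
    then have "\<pi> x * pi_join ys = \<pi> x" "h (\<pi> x) = 1"
      by (simp_all add: idem_le_def pi_join_def char_of_hom_def)
    then have "h (pi_join ys) = 1"
      using h unfolding alg_hom_K_def by (metis mult_1)
    then show "\<exists>y\<in>set ys. char_of_hom h y"
      by (auto simp: alg_hom_K_pi_join[OF h] char_of_hom_def split: if_splits)
  qed
  ultimately show ?thesis
    by (simp add: tight_chars_def sl_character_def)
qed

lemma char_hom_char_of_hom:
  assumes "h \<in> alg_chars"
  shows "char_hom (char_of_hom h) = h"
proof
  fix a
  have h: "alg_hom_K sc h"
    using assms by (simp add: alg_chars_def)
  obtain L where L: "a = lincomb L"
    using ex_lincomb by blast
  have "evaluate (char_of_hom h) L = (\<Sum>(c, x)\<leftarrow>L. c * h (\<pi> x))"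
  proof (induction L)
    case (Cons p L)
    then show ?case
      using alg_hom_K_pi_cases[OF h, of "snd p"] by (cases p) (auto simp: char_of_hom_def)
  qed simp
  then show "char_hom (char_of_hom h) a = h a"
    using L char_hom_lincomb[OF char_of_hom_tight[OF assms]] alg_hom_K_lincomb[OF h] by simp
qed

lemma char_of_hom_char_hom: "\<phi> \<in> tight_chars \<Longrightarrow> char_of_hom (char_hom \<phi>) = \<phi>"
  by (auto simp: char_of_hom_def char_hom_pi)

lemma char_hom_in_alg_chars: "\<phi> \<in> tight_chars \<Longrightarrow> char_hom \<phi> \<in> alg_chars"
  by (simp add: alg_chars_def alg_hom_K_char_hom char_hom_nonzero)

lemma char_hom_lincomb_cong:
  assumes "\<phi> \<in> tight_chars" "\<psi> \<in> tight_chars" "\<forall>x\<in>snd ` set L. \<phi> x = \<psi> x"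
  shows "char_hom \<phi> (lincomb L) = char_hom \<psi> (lincomb L)"
  using assms evaluate_cong by (simp add: char_hom_lincomb)

lemma continuous_map_char_of_hom: "continuous_map (alg_spectrum sc) (tight_spectrum \<pi>) char_of_hom"
  unfolding tight_spectrum_eq continuous_map_in_subtopology
proof
  show "continuous_map (alg_spectrum sc) pointwise_top char_of_hom"
    unfolding pointwise_top_def continuous_map_componentwise_UNIV alg_spectrum_eq
  proof
    fix x
    show "continuous_map (subtopology (product_topology (\<lambda>_. discrete_topology UNIV) UNIV) alg_chars)
        (discrete_topology UNIV) (\<lambda>h. char_of_hom h x)"
      by (rule continuous_map_pointwise_finitely_determined[of "{\<pi> x}", unfolded pointwise_top_def])
        (auto simp: char_of_hom_def)
  qed
  show "char_of_hom \<in> topspace (alg_spectrum sc) \<rightarrow> tight_chars"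
    using char_of_hom_tight by (auto simp: alg_spectrum_eq)
qed

lemma continuous_map_char_hom: "continuous_map (tight_spectrum \<pi>) (alg_spectrum sc) char_hom"
  unfolding alg_spectrum_eq continuous_map_in_subtopology
proof
  show "continuous_map (tight_spectrum \<pi>) pointwise_top char_hom"
    unfolding pointwise_top_def continuous_map_componentwise_UNIV tight_spectrum_eq
  proof
    fix a :: 'a
    obtain L where L: "a = lincomb L"
      using ex_lincomb by blast
    show "continuous_map (subtopology (product_topology (\<lambda>_. discrete_topology UNIV) UNIV) tight_chars)
        (discrete_topology UNIV) (\<lambda>\<phi>. char_hom \<phi> a)"
      by (rule continuous_map_pointwise_finitely_determined[of "snd ` set L", unfolded pointwise_top_def])
        (auto simp: L intro: char_hom_lincomb_cong)
  qed
  show "char_hom \<in> topspace (tight_spectrum \<pi>) \<rightarrow> alg_chars"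
    using char_hom_in_alg_chars by auto
qed

theorem alg_spectrum_homeomorphic_tight_spectrum: "alg_spectrum sc homeomorphic_space tight_spectrum \<pi>"
  unfolding homeomorphic_space_def
proof (intro exI)
  show "homeomorphic_maps (alg_spectrum sc) (tight_spectrum \<pi>) char_of_hom char_hom"
    unfolding homeomorphic_maps_def
    using continuous_map_char_of_hom continuous_map_char_hom
    by (simp add: alg_spectrum_eq char_hom_char_of_hom char_of_hom_char_hom)
qed

section \<open>The Gelfand transform\<close>

definition gelfand :: "'a \<Rightarrow> ('e \<Rightarrow> bool) \<Rightarrow> 'k" where
  "gelfand a = (\<lambda>\<phi>. if \<phi> \<in> tight_chars then char_hom \<phi> a else 0)"

lemma gelfand_add: "gelfand (a + b) = (\<lambda>\<phi>. gelfand a \<phi> + gelfand b \<phi>)"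
  by (auto simp: gelfand_def char_hom_add)

lemma gelfand_mult: "gelfand (a * b) = (\<lambda>\<phi>. gelfand a \<phi> * gelfand b \<phi>)"
  by (auto simp: gelfand_def char_hom_mult)

lemma gelfand_scale: "gelfand (sc c a) = (\<lambda>\<phi>. c * gelfand a \<phi>)"
  by (auto simp: gelfand_def char_hom_scale)

lemma inj_gelfand: "inj gelfand"
proof (rule injI)
  fix a b
  assume "gelfand a = gelfand b"
  then have "\<forall>\<phi>\<in>tight_chars. char_hom \<phi> (a - b) = 0"
    by (metis char_hom_diff gelfand_def right_minus_eq)
  then show "a = b"
    using char_hom_separates[of "a - b"] by simp
qed

lemma compactin_tight_chars_containing: "compactin (tight_spectrum \<pi>) {\<phi> \<in> tight_chars. \<phi> x}"
proof -
  have eq: "{\<phi> \<in> tight_chars. \<phi> x} =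
      {\<phi>. \<forall>i::unit. \<phi> x \<and> \<not> \<phi> bot} \<inter>
      {\<phi>. \<forall>p. \<phi> (inf (fst p) (snd p)) = (\<phi> (fst p) \<and> \<phi> (snd p))} \<inter>
      {\<phi>. \<forall>q. snd q \<noteq> [] \<longrightarrow> idem_le (\<pi> (fst q)) (idem_join (map \<pi> (snd q))) \<longrightarrow> \<phi> (fst q) \<longrightarrow>
        (\<exists>w\<in>set (snd q). \<phi> w)}"
    by (auto simp: tight_chars_def sl_character_def pi_tight_def)
  have "closedin pointwise_top {\<phi> \<in> tight_chars. \<phi> x}"
    unfolding eq
  proof (intro closedin_Int)
    show "closedin pointwise_top {\<phi>. \<forall>i::unit. \<phi> x \<and> \<not> \<phi> bot}"
      by (rule closedin_pointwise_finitely_determined[where S = "\<lambda>_. {x, bot}"]) auto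
    show "closedin pointwise_top {\<phi>. \<forall>p. \<phi> (inf (fst p) (snd p)) = (\<phi> (fst p) \<and> \<phi> (snd p))}"
      by (rule closedin_pointwise_finitely_determined[where S = "\<lambda>p. {fst p, snd p, inf (fst p) (snd p)}"])
        auto
    show "closedin pointwise_top {\<phi>. \<forall>q. snd q \<noteq> [] \<longrightarrow> idem_le (\<pi> (fst q)) (idem_join (map \<pi> (snd q))) \<longrightarrow>
        \<phi> (fst q) \<longrightarrow> (\<exists>w\<in>set (snd q). \<phi> w)}"
      by (rule closedin_pointwise_finitely_determined[where S = "\<lambda>q. insert (fst q) (set (snd q))"]) auto
  qed
  then have "compactin pointwise_top {\<phi> \<in> tight_chars. \<phi> x}"
    by (rule closedin_compact_space[OF compact_space_pointwise_top])
  then show ?thesis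
    by (auto simp: tight_spectrum_eq compactin_subtopology)
qed

lemma continuous_map_gelfand: "continuous_map (tight_spectrum \<pi>) (discrete_topology UNIV) (gelfand a)"
proof -
  obtain L where L: "a = lincomb L"
    using ex_lincomb by blast
  show ?thesis
    unfolding tight_spectrum_eq
  proof (rule continuous_map_pointwise_finitely_determined[of "snd ` set L"])
    fix \<phi> \<psi> assume "\<phi> \<in> tight_chars" "\<psi> \<in> tight_chars" "\<forall>x\<in>snd ` set L. \<phi> x = \<psi> x"
    then show "gelfand a \<phi> = gelfand a \<psi>"
      using char_hom_lincomb_cong[of \<phi> \<psi> L] by (simp add: gelfand_def L)
  qed auto
qed

lemma closedin_gelfand_support: "closedin (tight_spectrum \<pi>) {\<phi> \<in> tight_chars. gelfand a \<phi> \<noteq> 0}"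
  using closedin_continuous_map_preimage[OF continuous_map_gelfand, of "UNIV - {0}"] by simp

lemma compactin_gelfand_support: "compactin (tight_spectrum \<pi>) {\<phi> \<in> tight_chars. gelfand a \<phi> \<noteq> 0}"
proof -
  obtain L where L: "a = lincomb L"
    using ex_lincomb by blast
  have "{\<phi> \<in> tight_chars. gelfand a \<phi> \<noteq> 0} \<subseteq> (\<Union>x\<in>snd ` set L. {\<phi> \<in> tight_chars. \<phi> x})"
    using evaluate_nonzero_imp_ex by (auto simp: gelfand_def L char_hom_lincomb)
  moreover have "compactin (tight_spectrum \<pi>) (\<Union>x\<in>snd ` set L. {\<phi> \<in> tight_chars. \<phi> x})"
    by (intro compactin_Union) (auto simp: compactin_tight_chars_containing)
  ultimately show ?thesis
    using closed_compactin closedin_gelfand_support by blast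
qed

lemma gelfand_in_Cc: "gelfand a \<in> Cc (tight_spectrum \<pi>)"
proof -
  have "compactin (tight_spectrum \<pi>) (tight_spectrum \<pi> closure_of {\<phi> \<in> tight_chars. gelfand a \<phi> \<noteq> 0})"
    using compactin_gelfand_support closedin_gelfand_support closure_of_closedin by metis
  moreover have "gelfand a \<phi> = 0" if "\<phi> \<notin> tight_chars" for \<phi>
    using that by (simp add: gelfand_def)
  ultimately show ?thesis
    using locally_constant_if_continuous_discrete[OF continuous_map_gelfand] by (simp add: Cc_def)
qed

text \<open>The witness for \<open>x # xs\<close> combines two witnesses for \<open>xs\<close>, cut down to \<open>\<pi> x\<close> by
  \<open>b \<mapsto> \<pi> x * b\<close> and to its complement by \<open>a \<mapsto> a - \<pi> x * a\<close>.\<close>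

lemma ex_char_hom_eq_finite_function:
  assumes "g {} = 0"
  shows "\<exists>a. \<forall>\<psi>\<in>tight_chars. char_hom \<psi> a = g {x \<in> set xs. \<psi> x}"
  using assms
proof (induction xs arbitrary: g)
  case Nil
  then show ?case
    using char_hom_zero by auto
next
  case (Cons x xs)
  obtain b where b: "\<forall>\<psi>\<in>tight_chars. char_hom \<psi> b = g (insert x {y \<in> set xs. \<psi> y}) - g {x}"
    using Cons.IH[of "\<lambda>S. g (insert x S) - g {x}"] by auto
  obtain a where a: "\<forall>\<psi>\<in>tight_chars. char_hom \<psi> a = g ({y \<in> set xs. \<psi> y} - {x})"
    using Cons.IH[of "\<lambda>S. g (S - {x})"] Cons.prems by auto
  show ?case
  proof (intro exI ballI)
    fix \<psi> assume \<psi>: "\<psi> \<in> tight_chars"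
    show "char_hom \<psi> (\<pi> x * b + sc (g {x}) (\<pi> x) + (a - \<pi> x * a)) = g {y \<in> set (x # xs). \<psi> y}"
    proof (cases "\<psi> x")
      case True
      then have "{y \<in> set (x # xs). \<psi> y} = insert x {y \<in> set xs. \<psi> y}"
        by auto
      with True show ?thesis
        using \<psi> a b by (simp add: char_hom_add char_hom_mult char_hom_scale char_hom_diff char_hom_pi)
    next
      case False
      then have "{y \<in> set (x # xs). \<psi> y} = {y \<in> set xs. \<psi> y} - {x}"
        by auto
      with False show ?thesis
        using \<psi> a b by (simp add: char_hom_add char_hom_mult char_hom_scale char_hom_diff char_hom_pi)
    qed
  qed
qed

lemma gelfand_surj:
  assumes f: "f \<in> Cc (tight_spectrum \<pi>)"
  shows "\<exists>a. gelfand a = f"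
proof -
  obtain St g where "finite St" "g {} = 0" and g: "\<And>\<psi>. \<psi> \<in> tight_chars \<Longrightarrow> f \<psi> = g {x \<in> St. \<psi> x}"
    using Cc_pointwise_factors_through_finite[of f tight_chars] f tight_chars_nonzero
    by (auto simp: tight_spectrum_eq)
  then obtain xs where "set xs = St"
    using finite_list by blast
  then obtain a where a: "\<forall>\<psi>\<in>tight_chars. char_hom \<psi> a = g {x \<in> St. \<psi> x}"
    using ex_char_hom_eq_finite_function[of g xs] \<open>g {} = 0\<close> by blast
  have "f \<psi> = 0" if "\<psi> \<notin> tight_chars" for \<psi>
    using f that by (simp add: Cc_def)
  then have "gelfand a = f"
    using a g by (auto simp: gelfand_def)
  then show ?thesis ..
qed

lemma bij_betw_gelfand: "bij_betw gelfand UNIV (Cc (tight_spectrum \<pi>))"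
  unfolding bij_betw_def using inj_gelfand gelfand_in_Cc gelfand_surj by blast

end

theorem proposition15p14:
  fixes sc :: "'k::field \<Rightarrow> 'a::ring \<Rightarrow> 'a"
    and \<pi> :: "'e::{semilattice_inf,order_bot} \<Rightarrow> 'a"
  assumes "K_algebra sc"
    and "\<pi> bot = 0"
    and "\<forall>x y. \<pi> (inf x y) = \<pi> x * \<pi> y"
    and "alg_gen sc (range \<pi>) = UNIV"
  shows "alg_spectrum sc homeomorphic_space tight_spectrum \<pi> \<and>
    (\<exists>\<Phi> :: 'a \<Rightarrow> ('e \<Rightarrow> bool) \<Rightarrow> 'k.
        bij_betw \<Phi> UNIV (Cc (tight_spectrum \<pi>)) \<and>
        (\<forall>a b. \<Phi> (a + b) = (\<lambda>x. \<Phi> a x + \<Phi> b x)) \<and>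
        (\<forall>a b. \<Phi> (a * b) = (\<lambda>x. \<Phi> a x * \<Phi> b x)) \<and>
        (\<forall>c a. \<Phi> (sc c a) = (\<lambda>x. c * \<Phi> a x)))"
proof -
  interpret semilattice_generated_algebra sc \<pi>
    using assms by unfold_locales auto
  show ?thesis
  proof (intro conjI exI[of _ gelfand] allI)
    show "alg_spectrum sc homeomorphic_space tight_spectrum \<pi>"
      by (rule alg_spectrum_homeomorphic_tight_spectrum)
    show "bij_betw gelfand UNIV (Cc (tight_spectrum \<pi>))"
      by (rule bij_betw_gelfand)
  qed (simp_all add: gelfand_add gelfand_mult gelfand_scale)
qed

end
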